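(* Let $\mathcal T=(T,\lambda)$ be a temporal oriented tree with connectivity graph $G$, and let $H$ be an induced cycle of $G$ of even length $k\ge 6$, with vertices cyclically ordered $u_1,\dots,u_k$ (indices taken modulo $k$). For each edge $e=uv$ of $G$, let $Q_e$ be any temporal path of $\mathcal T$ from $u$ to $v$ or from $v$ to $u$. Then for every $i$, the paths $Q_{u_iu_{i+1}}$ and $Q_{u_{i+2}u_{i+3}}$ have a common vertex.
   Context: A temporal digraph is a pair $(D,\lambda)$ with $D=(V,A)$ a finite digraph and $\lambda:A\to 2^{\{1,\dots,t_{\max}\}}$ giving the time-steps at which each arc is active. A temporal oriented tree $\mathcal T=(T,\lambda)$ is one whose underlying digraph $T$ is an orientation of a tree. A temporal path is a sequence $(v_1,v_2,t_1),\dots,(v_{k-1},v_k,t_{k-1})$ with pairwise distinct $v_i$, $\overrightarrow{v_iv_{i+1}}\in A$, $t_i\in\lambda(\overrightarrow{v_iv_{i+1}})$ and $t_1<\dots<t_{k-1}$. Two vertices $u\ne v$ are temporally connected if there is a temporal path from $u$ to $v$ or from $v$ to $u$. The connectivity graph of $\mathcal T$ is the undirected graph $G$ with $V(G)=V(T)$ and $uv\in E(G)$ iff $u\neq v$ and $u,v$ are temporally connected. *)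

theory Defs
  imports Main
begin

definition temporal_digraph ::
  "'v set \<Rightarrow> ('v \<times> 'v) set \<Rightarrow> (('v \<times> 'v) \<Rightarrow> nat set) \<Rightarrow> nat \<Rightarrow> bool" where
  "temporal_digraph V A lam tmax \<longleftrightarrow>
     finite V \<and> A \<subseteq> V \<times> V \<and> (\<forall>v. (v, v) \<notin> A) \<and>
     (\<forall>a\<in>A. lam a \<subseteq> {1..tmax})"

definition und :: "('v \<times> 'v) set \<Rightarrow> ('v \<times> 'v) set" where
  "und A = A \<union> A\<inverse>"

definition oriented_tree :: "'v set \<Rightarrow> ('v \<times> 'v) set \<Rightarrow> bool" where
  "oriented_tree V A \<longleftrightarrow>
     finite V \<and> V \<noteq> {} \<and> A \<subseteq> V \<times> V \<and> (\<forall>v. (v, v) \<notin> A) \<and>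
     (\<forall>u v. (u, v) \<in> A \<longrightarrow> (v, u) \<notin> A) \<and>
     (\<forall>u\<in>V. \<forall>v\<in>V. (u, v) \<in> (und A)\<^sup>*) \<and>
     card A = card V - 1"

definition temporal_oriented_tree ::
  "'v set \<Rightarrow> ('v \<times> 'v) set \<Rightarrow> (('v \<times> 'v) \<Rightarrow> nat set) \<Rightarrow> nat \<Rightarrow> bool" where
  "temporal_oriented_tree V A lam tmax \<longleftrightarrow>
     temporal_digraph V A lam tmax \<and> oriented_tree V A"

text \<open>A temporal path (v_1,v_2,t_1),...,(v_{k-1},v_k,t_{k-1}), represented by the
  vertex list vs = [v_1,...,v_k] and the time list ts = [t_1,...,t_{k-1}].\<close>
definition temporal_path ::
  "('v \<times> 'v) set \<Rightarrow> (('v \<times> 'v) \<Rightarrow> nat set) \<Rightarrow> 'v list \<Rightarrow> nat list \<Rightarrow> bool" where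
  "temporal_path A lam vs ts \<longleftrightarrow>
     length vs = Suc (length ts) \<and> distinct vs \<and>
     (\<forall>i < length ts. (vs ! i, vs ! Suc i) \<in> A \<and> ts ! i \<in> lam (vs ! i, vs ! Suc i)) \<and>
     sorted_wrt (<) ts"

definition temporal_path_from_to ::
  "('v \<times> 'v) set \<Rightarrow> (('v \<times> 'v) \<Rightarrow> nat set) \<Rightarrow> 'v list \<times> nat list \<Rightarrow> 'v \<Rightarrow> 'v \<Rightarrow> bool" where
  "temporal_path_from_to A lam P u v \<longleftrightarrow>
     temporal_path A lam (fst P) (snd P) \<and> hd (fst P) = u \<and> last (fst P) = v"

definition temporally_connected ::
  "'v set \<Rightarrow> ('v \<times> 'v) set \<Rightarrow> (('v \<times> 'v) \<Rightarrow> nat set) \<Rightarrow> 'v \<Rightarrow> 'v \<Rightarrow> bool" where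
  "temporally_connected V A lam u v \<longleftrightarrow>
     u \<in> V \<and> v \<in> V \<and> u \<noteq> v \<and>
     ((\<exists>P. temporal_path_from_to A lam P u v) \<or> (\<exists>P. temporal_path_from_to A lam P v u))"

definition induced_cycle :: "'v set \<Rightarrow> ('v \<Rightarrow> 'v \<Rightarrow> bool) \<Rightarrow> (nat \<Rightarrow> 'v) \<Rightarrow> nat \<Rightarrow> bool" where
  "induced_cycle V E c k \<longleftrightarrow>
     k \<ge> 3 \<and> inj_on c {..<k} \<and> c ` {..<k} \<subseteq> V \<and>
     (\<forall>i<k. \<forall>j<k. E (c i) (c j) \<longleftrightarrow> (j = Suc i mod k \<or> i = Suc j mod k))"

end

theory Submission
  imports Defs
begin

text \<open>
  Rotate the cycle so that the four vertices are c 0, ..., c 3. If the paths for c 0 c 1 and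
  c 2 c 3 were disjoint, the tree would contain an arc (a, b) whose deletion puts them into
  different components; then c 0, c 1 lie on one side, c 2, c 3 on the other. The temporal
  path for c 1 c 2 must cross the arc, and so must the path for some edge c p c (p+1) of the
  other half c 3, ..., c (k-1), c 0 of the cycle. Both traverse the arc from a to b, so the
  one traversing it earlier can be continued along the remainder of the other; this gives a
  temporal path between one of c 1, c 2 and one of c p, c (p+1) with endpoints on different
  sides. As the cycle is induced, such a pair can only be c 1, c 0 or c 2, c 3, which lie on
  the same side.
\<close>

lemma all_less_Suc_add:
  "(\<forall>i < Suc (m + n). P i) \<longleftrightarrow> (\<forall>i < m. P i) \<and> P m \<and> (\<forall>j < n. P (Suc (m + j)))"
  (is "?l \<longleftrightarrow> ?r")
proof
  assume ?r
  show ?l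
  proof (intro allI impI)
    fix i assume "i < Suc (m + n)"
    show "P i"
    proof (cases "i \<le> m")
      case True
      then show ?thesis using \<open>?r\<close> by (cases "i = m") auto
    next
      case False
      then have "i = Suc (m + (i - Suc m))" "i - Suc m < n"
        using \<open>i < Suc (m + n)\<close> by arith+
      then show ?thesis using \<open>?r\<close> by metis
    qed
  qed
qed auto

lemma temporal_path_append:
  assumes len: "length xs = Suc (length us)"
  shows "temporal_path A lam (xs @ ys) (us @ t # ws) \<longleftrightarrow>
    temporal_path A lam xs us \<and> temporal_path A lam ys ws \<and> set xs \<inter> set ys = {} \<and>
    (last xs, hd ys) \<in> A \<and> t \<in> lam (last xs, hd ys) \<and>
    (\<forall>u \<in> set us. u < t) \<and> (\<forall>w \<in> set ws. t < w)"
proof -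
  have "xs \<noteq> []"
    using len by auto
  with len have xs: "xs \<noteq> []" "last xs = xs ! length us"
    by (simp_all add: last_conv_nth)
  have sorted: "sorted_wrt (<) (us @ t # ws) \<longleftrightarrow>
      sorted_wrt (<) us \<and> sorted_wrt (<) ws \<and> (\<forall>u \<in> set us. u < t) \<and> (\<forall>w \<in> set ws. t < w)"
    by (auto simp: sorted_wrt_append intro: less_trans)
  have arcs: "(\<forall>i < length (us @ t # ws). ((xs @ ys) ! i, (xs @ ys) ! Suc i) \<in> A \<and>
        (us @ t # ws) ! i \<in> lam ((xs @ ys) ! i, (xs @ ys) ! Suc i)) \<longleftrightarrow>
      (\<forall>i < length us. (xs ! i, xs ! Suc i) \<in> A \<and> us ! i \<in> lam (xs ! i, xs ! Suc i)) \<and>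
      ((last xs, ys ! 0) \<in> A \<and> t \<in> lam (last xs, ys ! 0)) \<and>
      (\<forall>j < length ws. (ys ! j, ys ! Suc j) \<in> A \<and> ws ! j \<in> lam (ys ! j, ys ! Suc j))"
    unfolding length_append list.size add_Suc_right all_less_Suc_add
    using len xs by (simp add: nth_append)
  have "length (xs @ ys) = Suc (length (us @ t # ws)) \<longleftrightarrow> length ys = Suc (length ws)"
    using len by simp
  then show ?thesis
    unfolding temporal_path_def arcs sorted distinct_append
    using len xs(2) by (cases ys) auto
qed

lemma temporal_path_splice:
  assumes "temporal_path A lam (xs1 @ ys1) (us1 @ t1 # ws1)" "length xs1 = Suc (length us1)"
    and "temporal_path A lam (xs2 @ ys2) (us2 @ t2 # ws2)" "length xs2 = Suc (length us2)"
    and "last xs1 = last xs2" "hd ys1 = hd ys2" "t1 \<le> t2" "set xs1 \<inter> set ys2 = {}"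
  shows "temporal_path A lam (xs1 @ ys2) (us1 @ t1 # ws2)"
  using assms unfolding temporal_path_append[OF assms(2)] temporal_path_append[OF assms(4)]
  by (metis le_less_trans)

lemma temporal_path_successively:
  "temporal_path A lam vs ts \<Longrightarrow> successively (\<lambda>x y. (x, y) \<in> A) vs"
  by (auto simp: temporal_path_def successively_conv_nth)

lemma temporal_path_successively_und:
  "temporal_path A lam vs ts \<Longrightarrow> successively (\<lambda>x y. (x, y) \<in> und A) vs"
  by (auto simp: und_def elim: successively_mono dest: temporal_path_successively)

lemma temporal_path_set_subset_Field:
  assumes "temporal_path A lam vs ts" "ts \<noteq> []"
  shows "set vs \<subseteq> Field A"
proof -
  have "successively (\<lambda>x y. (x, y) \<in> A) vs" "Suc 0 < length vs"
    using assms by (auto simp: temporal_path_successively temporal_path_def)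
  then show ?thesis
  proof (induction vs rule: induct_list012)
    case (3 x y zs)
    then show ?case
      by (cases zs) (auto simp: Field_def)
  qed auto
qed

lemma sym_und: "sym (und F)"
  by (auto simp: und_def intro: symI)

lemma rtrancl_und_sym: "(x, y) \<in> (und F)\<^sup>* \<Longrightarrow> (y, x) \<in> (und F)\<^sup>*"
  by (rule symD[OF sym_rtrancl[OF sym_und]])

lemma rtrancl_Image_subset_closed: "S \<subseteq> X \<Longrightarrow> r `` X \<subseteq> X \<Longrightarrow> r\<^sup>* `` S \<subseteq> X"
  using Image_closed_trancl by blast

lemma finite_rtrancl_und_Image: "finite F \<Longrightarrow> finite S \<Longrightarrow> finite ((und F)\<^sup>* `` S)"
proof -
  assume "finite F" "finite S"
  moreover have "(und F)\<^sup>* `` S \<subseteq> S \<union> Range (und F)"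
    by (auto elim: rtranclE)
  ultimately show ?thesis
    by (simp add: und_def finite_subset)
qed

lemma card_rtrancl_und_Image_le:
  assumes "finite F" "finite S"
  shows "card ((und F)\<^sup>* `` S) \<le> card F + card S"
  using assms
proof (induction F arbitrary: S rule: finite_induct)
  case empty
  then show ?case by (simp add: und_def)
next
  case (insert e F)
  obtain a b where e: "e = (a, b)" by fastforce
  let ?R = "(und F)\<^sup>*"
  \<comment> \<open>T adds at most one endpoint of the new arc to S, so that the set reachable
    from T is closed under that arc.\<close>
  obtain T where T: "S \<subseteq> T" "finite T" "card T \<le> Suc (card S)"
    and ab: "a \<in> ?R `` T \<longleftrightarrow> b \<in> ?R `` T"
  proof (cases "a \<in> ?R `` S \<or> b \<in> ?R `` S")
    case True
    then obtain x y where "x \<in> ?R `` S" "{x, y} = {a, b}" by blast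
    then show ?thesis
      using insert.prems by (intro that[of "insert y S"]) (auto simp: card_insert_if)
  next
    case False
    then show ?thesis
      using insert.prems by (intro that[of S]) auto
  qed
  have "und (insert e F) `` (?R `` T) \<subseteq> ?R `` T"
    using ab by (auto simp: e und_def intro: rtrancl_into_rtrancl)
  then have "(und (insert e F))\<^sup>* `` S \<subseteq> ?R `` T"
    using T(1) by (intro rtrancl_Image_subset_closed) auto
  then have "card ((und (insert e F))\<^sup>* `` S) \<le> card (?R `` T)"
    using insert.hyps(1) T(2) by (intro card_mono finite_rtrancl_und_Image)
  also have "\<dots> \<le> card F + card T"
    using insert.IH T(2) .
  finally show ?case
    using insert.hyps T(3) by simp
qed

lemma successively_und_rtrancl:
  assumes "successively (\<lambda>x y. (x, y) \<in> und F) xs" "x \<in> set xs" "y \<in> set xs"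
  shows "(x, y) \<in> (und F)\<^sup>*"
  using assms
proof (induction xs arbitrary: x y)
  case Nil
  then show ?case by simp
next
  case (Cons z zs)
  have "(z, w) \<in> (und F)\<^sup>*" if "w \<in> set (z # zs)" for w
    using that Cons.IH[of "hd zs" w] Cons.prems(1)
    by (cases zs) (auto simp: successively_Cons intro: converse_rtrancl_into_rtrancl)
  then show ?case
    using Cons.prems(2,3) by (meson rtrancl_trans rtrancl_und_sym)
qed

lemma successively_und_avoiding:
  assumes "successively (\<lambda>x y. (x, y) \<in> und A) xs" "z \<notin> set xs" "z = a \<or> z = b"
  shows "successively (\<lambda>x y. (x, y) \<in> und (A - {(a, b)})) xs"
  using assms(1) by (rule successively_mono) (use assms(2,3) in \<open>auto simp: und_def\<close>)

lemma chain_in_rtrancl: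
  "m \<le> n \<Longrightarrow> (\<And>p. m \<le> p \<Longrightarrow> p < n \<Longrightarrow> (f p, f (Suc p)) \<in> r) \<Longrightarrow> (f m, f n) \<in> r\<^sup>*"
  by (induction n rule: dec_induct) (auto intro: rtrancl_into_rtrancl)

lemma oriented_tree_arc_bridge:
  assumes T: "oriented_tree V A" and ab: "(a, b) \<in> A"
  shows "(a, b) \<notin> (und (A - {(a, b)}))\<^sup>*"
proof
  \<comment> \<open>Otherwise all of V is reachable from a along the card V - 2 remaining arcs.\<close>
  let ?F = "A - {(a, b)}"
  let ?X = "(und ?F)\<^sup>* `` {a}"
  assume "(a, b) \<in> (und ?F)\<^sup>*"
  then have "und A `` ?X \<subseteq> ?X"
    by (auto simp: und_def intro: rtrancl_into_rtrancl)
  then have "(und A)\<^sup>* `` {a} \<subseteq> ?X"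
    by (intro rtrancl_Image_subset_closed) auto
  moreover have fin: "finite V" "A \<subseteq> V \<times> V" "V \<noteq> {}" "card A = card V - 1"
    and conn: "\<forall>u\<in>V. \<forall>v\<in>V. (u, v) \<in> (und A)\<^sup>*"
    using T by (auto simp: oriented_tree_def)
  moreover have "a \<in> V"
    using ab fin by auto
  ultimately have "V \<subseteq> ?X"
    by blast
  have finA: "finite A"
    using fin finite_subset by blast
  have "card V \<le> card ?X"
    using \<open>V \<subseteq> ?X\<close> finA by (intro card_mono finite_rtrancl_und_Image) auto
  also have "\<dots> \<le> card ?F + 1"
    using card_rtrancl_und_Image_le[of ?F "{a}"] finA by simp
  also have "\<dots> = card A"
    using card_Suc_Diff1[OF finA ab] by simp
  finally have "card V \<le> card A" .
  moreover have "card V > 0"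
    using fin card_gt_0_iff by blast
  ultimately show False
    using fin(4) by linarith
qed

lemma oriented_tree_separating_arc:
  assumes T: "oriented_tree V A"
    and ws: "successively (\<lambda>x y. (x, y) \<in> und A) ws" "distinct ws" "ws \<noteq> []"
      "hd ws \<in> set xs" "last ws \<in> set ys"
    and xs: "successively (\<lambda>x y. (x, y) \<in> und A) xs"
    and ys: "successively (\<lambda>x y. (x, y) \<in> und A) ys"
    and disj: "set xs \<inter> set ys = {}"
  obtains a b where "(a, b) \<in> A"
    "\<forall>x \<in> set xs. \<forall>x' \<in> set xs. (x, x') \<in> (und (A - {(a, b)}))\<^sup>*"
    "\<forall>y \<in> set ys. \<forall>y' \<in> set ys. (y, y') \<in> (und (A - {(a, b)}))\<^sup>*"
    "\<forall>x \<in> set xs. \<forall>y \<in> set ys. (x, y) \<notin> (und (A - {(a, b)}))\<^sup>*"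
proof -
  \<comment> \<open>The separating arc joins the last vertex p of ws in xs to its successor.\<close>
  obtain ws1 p ws2 where split: "ws = ws1 @ p # ws2" "p \<in> set xs" "\<forall>z \<in> set ws2. z \<notin> set xs"
    using split_list_last_propE[of ws "\<lambda>z. z \<in> set xs"] hd_in_set[OF ws(3)] ws(4) by blast
  have "ws2 \<noteq> []"
    using split ws(5) disj by auto
  then have "(p, hd ws2) \<in> und A" and ws2: "successively (\<lambda>x y. (x, y) \<in> und A) ws2"
    using ws(1) by (simp_all add: split successively_append_iff successively_Cons)
  then obtain a b where ab: "(a, b) \<in> A" "{a, b} = {p, hd ws2}"
    by (auto simp: und_def)
  let ?R = "(und (A - {(a, b)}))\<^sup>*"
  have "(p, hd ws2) \<notin> ?R"
    using oriented_tree_arc_bridge[OF T ab(1)] ab(2) by (auto simp: doubleton_eq_iff dest: rtrancl_und_sym)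
  have "hd ws2 \<notin> set xs" "p \<notin> set ys" "p \<notin> set ws2"
    using split \<open>ws2 \<noteq> []\<close> disj ws(2) by auto
  with ab(2) have conn_xs: "\<forall>x \<in> set xs. \<forall>x' \<in> set xs. (x, x') \<in> ?R"
    and conn_ys: "\<forall>y \<in> set ys. \<forall>y' \<in> set ys. (y, y') \<in> ?R"
    and conn_ws2: "(hd ws2, last ws2) \<in> ?R"
    using successively_und_rtrancl[OF successively_und_avoiding[OF xs]]
      successively_und_rtrancl[OF successively_und_avoiding[OF ys]]
      successively_und_rtrancl[OF successively_und_avoiding[OF ws2] hd_in_set last_in_set]
      \<open>ws2 \<noteq> []\<close> by (auto simp: doubleton_eq_iff)
  have "(x, y) \<notin> ?R" if "x \<in> set xs" "y \<in> set ys" for x y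
  proof
    assume "(x, y) \<in> ?R"
    moreover have "last ws2 \<in> set ys"
      using ws(5) \<open>ws2 \<noteq> []\<close> by (simp add: split)
    ultimately have "(p, hd ws2) \<in> ?R"
      using that split(2) conn_xs conn_ys conn_ws2 by (meson rtrancl_trans rtrancl_und_sym)
    with \<open>(p, hd ws2) \<notin> ?R\<close> show False ..
  qed
  with ab(1) conn_xs conn_ys show thesis
    by (intro that) auto
qed

lemma temporal_path_crosses_arc:
  fixes A :: "('v \<times> 'v) set" and a b :: 'v
  defines "R \<equiv> (und (A - {(a, b)}))\<^sup>*"
  assumes tp: "temporal_path A lam vs ts" and nc: "(hd vs, last vs) \<notin> R"
  obtains xs ys us t ws where "vs = xs @ ys" "ts = us @ t # ws" "length xs = Suc (length us)"
    "last xs = a" "hd ys = b" "\<forall>x \<in> set xs. (x, a) \<in> R" "\<forall>y \<in> set ys. (b, y) \<in> R"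
proof -
  have len: "length vs = Suc (length ts)"
    using tp by (simp add: temporal_path_def)
  then have "vs \<noteq> []"
    by auto
  then have "\<not> successively (\<lambda>x y. (x, y) \<in> und (A - {(a, b)})) vs"
    using nc successively_und_rtrancl[OF _ hd_in_set last_in_set] unfolding R_def by blast
  then obtain i where i: "Suc i < length vs" "(vs ! i, vs ! Suc i) \<notin> und (A - {(a, b)})"
    by (auto simp: successively_conv_nth)
  moreover have "(vs ! i, vs ! Suc i) \<in> A"
    using successively_nth[OF temporal_path_successively[OF tp] i(1)] .
  ultimately have arc: "vs ! i = a" "vs ! Suc i = b"
    by (auto simp: und_def)
  define xs ys us t ws where "xs = take (Suc i) vs" and "ys = drop (Suc i) vs"
    and "us = take i ts" and "t = ts ! i" and "ws = drop (Suc i) ts"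
  have split: "vs = xs @ ys" "ts = us @ t # ws" "length xs = Suc (length us)"
    using i(1) len by (simp_all add: xs_def ys_def us_def t_def ws_def id_take_nth_drop)
  have ends: "last xs = a" "hd ys = b"
    using i(1) arc by (simp_all add: xs_def ys_def take_Suc_conv_app_nth hd_drop_conv_nth)
  have ne: "xs \<noteq> []" "ys \<noteq> []"
    using i(1) \<open>vs \<noteq> []\<close> by (simp_all add: xs_def ys_def)
  have tps: "temporal_path A lam xs us" "temporal_path A lam ys ws" and disj: "set xs \<inter> set ys = {}"
    using tp temporal_path_append[OF split(3)] unfolding split(1,2) by simp_all
  have "b \<notin> set xs" "a \<notin> set ys"
    using disj ne ends by (auto dest: hd_in_set last_in_set)
  then have walks: "successively (\<lambda>x y. (x, y) \<in> und (A - {(a, b)})) xs"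
    "successively (\<lambda>x y. (x, y) \<in> und (A - {(a, b)})) ys"
    by (auto intro: successively_und_avoiding[OF temporal_path_successively_und] tps)
  have "\<forall>x \<in> set xs. (x, a) \<in> R" "\<forall>y \<in> set ys. (b, y) \<in> R"
    using successively_und_rtrancl[OF walks(1) _ last_in_set[OF ne(1)]]
      successively_und_rtrancl[OF walks(2) hd_in_set[OF ne(2)]]
    unfolding R_def ends by blast+
  with split ends show thesis
    by (rule that)
qed

lemma temporally_connected_sym:
  "temporally_connected V A lam u v \<Longrightarrow> temporally_connected V A lam v u"
  by (auto simp: temporally_connected_def)

lemma temporally_connected_by_splice:
  fixes A :: "('v \<times> 'v) set" and a b :: 'v
  defines "R \<equiv> (und (A - {(a, b)}))\<^sup>*"
  assumes AV: "A \<subseteq> V \<times> V" and cut: "(a, b) \<notin> R"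
    and p: "temporal_path A lam (xs @ ys) (us @ t # ws)" "length xs = Suc (length us)"
      "last xs = a" "hd ys = b" "\<forall>x \<in> set xs. (x, a) \<in> R"
    and p': "temporal_path A lam (xs' @ ys') (us' @ t' # ws')" "length xs' = Suc (length us')"
      "last xs' = a" "hd ys' = b" "\<forall>y \<in> set ys'. (b, y) \<in> R"
    and "t \<le> t'"
  shows "(hd xs, last ys') \<notin> R" "temporally_connected V A lam (hd xs) (last ys')"
proof -
  have "temporal_path A lam ys' ws'"
    using p'(1) unfolding temporal_path_append[OF p'(2)] by blast
  then have ne: "xs \<noteq> []" "ys' \<noteq> []"
    using p(2) by (auto simp: temporal_path_def)
  have far: "(x, y) \<notin> R" if "x \<in> set xs" "y \<in> set ys'" for x y
    using that p(5) p'(5) cut unfolding R_def by (meson rtrancl_trans rtrancl_und_sym)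
  then show sep: "(hd xs, last ys') \<notin> R"
    using ne by simp
  from far have "set xs \<inter> set ys' = {}"
    by (auto simp: R_def)
  then have path: "temporal_path A lam (xs @ ys') (us @ t # ws')"
    using temporal_path_splice[OF p(1,2) p'(1,2)] p(3,4) p'(3,4) \<open>t \<le> t'\<close> by simp
  then have "set (xs @ ys') \<subseteq> V"
    using AV temporal_path_set_subset_Field[OF path] by (auto simp: Field_def)
  then have "hd xs \<in> V" "last ys' \<in> V"
    using ne by auto
  moreover have "hd xs \<noteq> last ys'"
    using sep unfolding R_def by auto
  moreover have "temporal_path_from_to A lam (xs @ ys', us @ t # ws') (hd xs) (last ys')"
    using path ne by (simp add: temporal_path_from_to_def)
  ultimately show "temporally_connected V A lam (hd xs) (last ys')"
    unfolding temporally_connected_def by auto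
qed

definition temporal_path_between ::
  "('v \<times> 'v) set \<Rightarrow> (('v \<times> 'v) \<Rightarrow> nat set) \<Rightarrow> 'v list \<times> nat list \<Rightarrow> 'v \<Rightarrow> 'v \<Rightarrow> bool" where
  "temporal_path_between A lam P u v \<longleftrightarrow>
     temporal_path_from_to A lam P u v \<or> temporal_path_from_to A lam P v u"

lemma temporal_path_betweenD:
  assumes "temporal_path_between A lam P u v"
  shows "temporal_path A lam (fst P) (snd P)" "u \<in> set (fst P)" "v \<in> set (fst P)"
    and "(hd (fst P) = u \<and> last (fst P) = v) \<or> (hd (fst P) = v \<and> last (fst P) = u)"
  using assms
  by (auto simp: temporal_path_between_def temporal_path_from_to_def temporal_path_def
      intro: hd_in_set last_in_set)

lemma temporal_path_between_walk:
  assumes "temporal_path_between A lam P u v"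
  obtains ws where "successively (\<lambda>x y. (x, y) \<in> und A) ws" "distinct ws" "ws \<noteq> []"
    "hd ws = u" "last ws = v"
proof -
  have tp: "temporal_path A lam (fst P) (snd P)"
    using temporal_path_betweenD[OF assms] by blast
  then have walk: "successively (\<lambda>x y. (x, y) \<in> und A) (fst P)" "distinct (fst P)" "fst P \<noteq> []"
    by (auto simp: temporal_path_successively_und temporal_path_def)
  then have "successively (\<lambda>x y. (x, y) \<in> und A) (rev (fst P))"
    by (auto simp: und_def elim: successively_mono)
  with walk temporal_path_betweenD(4)[OF assms] show thesis
    by (metis that distinct_rev hd_rev last_rev rev_is_Nil_conv)
qed

lemma temporal_path_between_crosses_arc:
  fixes A :: "('v \<times> 'v) set" and a b :: 'v
  defines "R \<equiv> (und (A - {(a, b)}))\<^sup>*"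
  assumes P: "temporal_path_between A lam P u v" and nc: "(u, v) \<notin> R"
  obtains xs ys us t ws where "temporal_path A lam (xs @ ys) (us @ t # ws)"
    "length xs = Suc (length us)" "last xs = a" "hd ys = b" "xs \<noteq> []" "ys \<noteq> []"
    "{hd xs, last ys} = {u, v}" "\<forall>x \<in> set xs. (x, a) \<in> R" "\<forall>y \<in> set ys. (b, y) \<in> R"
proof -
  note ends = temporal_path_betweenD[OF P]
  then have "(hd (fst P), last (fst P)) \<notin> R"
    using nc unfolding R_def by (auto dest: rtrancl_und_sym)
  then obtain xs ys us t ws where d: "fst P = xs @ ys" "snd P = us @ t # ws"
    "length xs = Suc (length us)" "last xs = a" "hd ys = b"
    "\<forall>x \<in> set xs. (x, a) \<in> R" "\<forall>y \<in> set ys. (b, y) \<in> R"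
    using temporal_path_crosses_arc[OF ends(1)] unfolding R_def by blast
  moreover have "xs \<noteq> []" "ys \<noteq> []"
    using ends(1) temporal_path_append[OF d(3)] d(1-3) by (auto simp: temporal_path_def)
  moreover have "{hd xs, last ys} = {u, v}"
    using ends(4) d(1) \<open>xs \<noteq> []\<close> \<open>ys \<noteq> []\<close> by auto
  ultimately show thesis
    using ends(1) by (intro that) auto
qed

lemma temporally_connected_across_arc:
  fixes A :: "('v \<times> 'v) set" and a b :: 'v
  defines "R \<equiv> (und (A - {(a, b)}))\<^sup>*"
  assumes AV: "A \<subseteq> V \<times> V" and cut: "(a, b) \<notin> R"
    and P: "temporal_path_between A lam P u v" "(u, v) \<notin> R"
    and P': "temporal_path_between A lam P' u' v'" "(u', v') \<notin> R"
  obtains x y where "x \<in> {u, v}" "y \<in> {u', v'}" "(x, y) \<notin> R" "temporally_connected V A lam x y"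
proof -
  obtain xs ys us t ws where d: "temporal_path A lam (xs @ ys) (us @ t # ws)"
    "length xs = Suc (length us)" "last xs = a" "hd ys = b" "xs \<noteq> []" "ys \<noteq> []"
    "{hd xs, last ys} = {u, v}" "\<forall>x \<in> set xs. (x, a) \<in> R" "\<forall>y \<in> set ys. (b, y) \<in> R"
    using temporal_path_between_crosses_arc[OF P[unfolded R_def]] unfolding R_def by blast
  obtain xs' ys' us' t' ws' where d': "temporal_path A lam (xs' @ ys') (us' @ t' # ws')"
    "length xs' = Suc (length us')" "last xs' = a" "hd ys' = b" "xs' \<noteq> []" "ys' \<noteq> []"
    "{hd xs', last ys'} = {u', v'}" "\<forall>x \<in> set xs'. (x, a) \<in> R" "\<forall>y \<in> set ys'. (b, y) \<in> R"
    using temporal_path_between_crosses_arc[OF P'[unfolded R_def]] unfolding R_def by blast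
  note splice = temporally_connected_by_splice[OF AV cut[unfolded R_def], folded R_def]
  show thesis
  proof (cases "t \<le> t'")
    case True
    have "hd xs \<in> {u, v}" "last ys' \<in> {u', v'}"
      using d(7) d'(7) by blast+
    moreover from True splice[OF d(1-4,8) d'(1-4,9)] have "(hd xs, last ys') \<notin> R"
      "temporally_connected V A lam (hd xs) (last ys')"
      by blast+
    ultimately show thesis
      by (rule that)
  next
    case False
    have "last ys \<in> {u, v}" "hd xs' \<in> {u', v'}"
      using d(7) d'(7) by blast+
    moreover from False splice[OF d'(1-4,8) d(1-4,9)] have "(hd xs', last ys) \<notin> R"
      "temporally_connected V A lam (hd xs') (last ys)"
      by simp_all
    then have "(last ys, hd xs') \<notin> R" "temporally_connected V A lam (last ys) (hd xs')"
      unfolding R_def by (auto intro: rtrancl_und_sym temporally_connected_sym)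
    ultimately show thesis
      by (rule that)
  qed
qed

lemma induced_cycle_rotate:
  assumes "induced_cycle V E c k"
  shows "induced_cycle V E (\<lambda>t. c ((i + t) mod k)) k"
proof -
  have k: "k \<ge> 3" and inj: "inj_on c {..<k}" and img: "c ` {..<k} \<subseteq> V"
    and adj: "\<forall>p<k. \<forall>q<k. E (c p) (c q) \<longleftrightarrow> (q = Suc p mod k \<or> p = Suc q mod k)"
    using assms by (auto simp: induced_cycle_def)
  have shift: "(i + p) mod k = (i + q) mod k \<longleftrightarrow> p mod k = q mod k" for p q
    by (simp add: nat_mod_eq_iff)
  have suc: "Suc ((i + p) mod k) mod k = (i + Suc p) mod k" for p
    by (simp add: mod_Suc_eq)
  have "inj_on (\<lambda>t. c ((i + t) mod k)) {..<k}"
    using k by (intro inj_onI) (auto simp: shift dest: inj_onD[OF inj])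
  moreover have "(\<lambda>t. c ((i + t) mod k)) ` {..<k} \<subseteq> V"
    using k img by auto
  moreover have "E (c ((i + p) mod k)) (c ((i + q) mod k)) \<longleftrightarrow> (q = Suc p mod k \<or> p = Suc q mod k)"
    if "p < k" "q < k" for p q
  proof -
    have "E (c ((i + p) mod k)) (c ((i + q) mod k)) \<longleftrightarrow>
        ((i + q) mod k = Suc ((i + p) mod k) mod k \<or> (i + p) mod k = Suc ((i + q) mod k) mod k)"
      using adj k by simp
    also have "\<dots> \<longleftrightarrow> (q mod k = Suc p mod k \<or> p mod k = Suc q mod k)"
      unfolding suc shift ..
    finally show ?thesis
      using that by simp
  qed
  ultimately show ?thesis
    using k by (simp add: induced_cycle_def)
qed

lemma induced_cycle_neighbours_1_2:
  assumes "induced_cycle V E c k" "k \<ge> 4" "q < k" "q = 0 \<or> 3 \<le> q"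
  shows "E (c 1) (c q) \<Longrightarrow> q = 0" and "E (c 2) (c q) \<Longrightarrow> q = 3"
  using assms by (auto simp: induced_cycle_def mod_Suc split: if_splits)

lemma oriented_tree_arc_separating_paths:
  assumes T: "oriented_tree V A"
    and P01: "temporal_path_between A lam P01 u0 u1"
    and P12: "temporal_path_between A lam P12 u1 u2"
    and P23: "temporal_path_between A lam P23 u2 u3"
    and disj: "set (fst P01) \<inter> set (fst P23) = {}"
  obtains a b where "(a, b) \<in> A" "(u1, u0) \<in> (und (A - {(a, b)}))\<^sup>*"
    "(u2, u3) \<in> (und (A - {(a, b)}))\<^sup>*" "(u1, u2) \<notin> (und (A - {(a, b)}))\<^sup>*"
    "(u3, u0) \<notin> (und (A - {(a, b)}))\<^sup>*"
proof -
  obtain ws where ws: "successively (\<lambda>x y. (x, y) \<in> und A) ws" "distinct ws" "ws \<noteq> []"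
    "hd ws = u1" "last ws = u2"
    by (rule temporal_path_between_walk[OF P12])
  note ends = temporal_path_betweenD(2,3)[OF P01] temporal_path_betweenD(2,3)[OF P23]
  obtain a b where "(a, b) \<in> A"
    and "\<forall>x \<in> set (fst P01). \<forall>x' \<in> set (fst P01). (x, x') \<in> (und (A - {(a, b)}))\<^sup>*"
    and "\<forall>y \<in> set (fst P23). \<forall>y' \<in> set (fst P23). (y, y') \<in> (und (A - {(a, b)}))\<^sup>*"
    and "\<forall>x \<in> set (fst P01). \<forall>y \<in> set (fst P23). (x, y) \<notin> (und (A - {(a, b)}))\<^sup>*"
    using oriented_tree_separating_arc[OF T ws(1-3) _ _
        temporal_path_successively_und[OF temporal_path_betweenD(1)[OF P01]]
        temporal_path_successively_und[OF temporal_path_betweenD(1)[OF P23]] disj]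
      ws(4,5) ends by metis
  with ends show thesis
    by (intro that) (auto dest: rtrancl_und_sym)
qed

lemma induced_cycle_temporal_paths_meet:
  assumes T: "oriented_tree V A"
    and cyc: "induced_cycle V (temporally_connected V A lam) c k" and k: "k \<ge> 4"
    and Qpath: "\<And>u v. temporally_connected V A lam u v \<Longrightarrow> temporal_path_between A lam (Q u v) u v"
  shows "set (fst (Q (c 0) (c 1))) \<inter> set (fst (Q (c 2) (c 3))) \<noteq> {}"
proof
  let ?E = "temporally_connected V A lam"
  assume disj: "set (fst (Q (c 0) (c 1))) \<inter> set (fst (Q (c 2) (c 3))) = {}"
  have path: "temporal_path_between A lam (Q (c p) (c (Suc p mod k))) (c p) (c (Suc p mod k))"
    if "p < k" for p
    using Qpath cyc that k by (simp add: induced_cycle_def)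
  have P01: "temporal_path_between A lam (Q (c 0) (c 1)) (c 0) (c 1)"
    and P12: "temporal_path_between A lam (Q (c 1) (c 2)) (c 1) (c 2)"
    and P23: "temporal_path_between A lam (Q (c 2) (c 3)) (c 2) (c 3)"
    using path[of 0] path[of 1] path[of 2] k by (simp_all add: numeral_eq_Suc)
  obtain a b where ab: "(a, b) \<in> A" and sides: "(c 1, c 0) \<in> (und (A - {(a, b)}))\<^sup>*"
    "(c 2, c 3) \<in> (und (A - {(a, b)}))\<^sup>*" "(c 1, c 2) \<notin> (und (A - {(a, b)}))\<^sup>*"
    "(c 3, c 0) \<notin> (und (A - {(a, b)}))\<^sup>*"
    by (rule oriented_tree_arc_separating_paths[OF T P01 P12 P23 disj])
  let ?R = "(und (A - {(a, b)}))\<^sup>*"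
  have "\<not> (\<forall>p. 3 \<le> p \<longrightarrow> p < k \<longrightarrow> (c (p mod k), c (Suc p mod k)) \<in> ?R)"
    using chain_in_rtrancl[of 3 k "\<lambda>t. c (t mod k)" ?R] sides(4) k by auto
  then obtain p where p: "3 \<le> p" "p < k" "(c p, c (Suc p mod k)) \<notin> ?R"
    by auto
  have AV: "A \<subseteq> V \<times> V"
    using T by (simp add: oriented_tree_def)
  obtain x y where xy: "x \<in> {c 1, c 2}" "y \<in> {c p, c (Suc p mod k)}" "(x, y) \<notin> ?R" "?E x y"
    using temporally_connected_across_arc[OF AV oriented_tree_arc_bridge[OF T ab] P12 sides(3)
        path[OF p(2)] p(3)] .
  obtain q where q: "y = c q" "q < k" "q = 0 \<or> 3 \<le> q"
    using xy(2) p(1,2) by (cases "Suc p = k") auto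
  from xy(1) consider "x = c 1" | "x = c 2"
    by blast
  then show False
  proof cases
    case 1
    then show False
      using induced_cycle_neighbours_1_2(1)[OF cyc k q(2,3)] xy(3,4) q(1) sides(1) by auto
  next
    case 2
    then show False
      using induced_cycle_neighbours_1_2(2)[OF cyc k q(2,3)] xy(3,4) q(1) sides(2) by auto
  qed
qed

theorem mainTheorem9:
  fixes V :: "'v set" and A :: "('v \<times> 'v) set" and lam :: "('v \<times> 'v) \<Rightarrow> nat set"
    and tmax :: nat and c :: "nat \<Rightarrow> 'v" and k :: nat
    and Q :: "'v \<Rightarrow> 'v \<Rightarrow> 'v list \<times> nat list"
  assumes tree: "temporal_oriented_tree V A lam tmax"
    and cyc: "induced_cycle V (temporally_connected V A lam) c k"
    and even: "even k" and k6: "k \<ge> 6"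
    and Qsym: "\<And>u v. Q u v = Q v u"
    and Qpath: "\<And>u v. temporally_connected V A lam u v \<Longrightarrow>
                 temporal_path_from_to A lam (Q u v) u v \<or> temporal_path_from_to A lam (Q u v) v u"
  shows "\<forall>i. set (fst (Q (c (i mod k)) (c ((i + 1) mod k))))
            \<inter> set (fst (Q (c ((i + 2) mod k)) (c ((i + 3) mod k)))) \<noteq> {}"
proof
  fix i
  define d where "d t = c ((i + t) mod k)" for t
  have "oriented_tree V A"
    using tree by (simp add: temporal_oriented_tree_def)
  moreover have "induced_cycle V (temporally_connected V A lam) d k"
    unfolding d_def by (rule induced_cycle_rotate[OF cyc])
  moreover have "\<And>u v. temporally_connected V A lam u v \<Longrightarrow> temporal_path_between A lam (Q u v) u v"
    using Qpath by (simp add: temporal_path_between_def)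
  ultimately have "set (fst (Q (d 0) (d 1))) \<inter> set (fst (Q (d 2) (d 3))) \<noteq> {}"
    using k6 by (intro induced_cycle_temporal_paths_meet) auto
  then show "set (fst (Q (c (i mod k)) (c ((i + 1) mod k))))
      \<inter> set (fst (Q (c ((i + 2) mod k)) (c ((i + 3) mod k)))) \<noteq> {}"
    by (simp add: d_def)
qed

end
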